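(* Let $\{(\bm x_j,y_j)\}_{j=1}^N\subseteq\mathbb{R}^P\times\{0,1\}$ and thresholds $0=p_0<p_1<\cdots<p_M<1$. Let $\bm\rho\in\mathbb{R}^P\setminus\{0\}$ and $\bm t=(t_0,\dots,t_M)\in\mathbb{R}^{M+1}$ satisfy $-\max_j|\bm x_j\bm\rho|\le t_0\le t_1\le\cdots\le t_M\le\max_j|\bm x_j\bm\rho|$. Let $\|X\|_\infty=\max_{1\le j\le N}\|\bm x_j\|_1$ and $\gamma_{\min}=\frac{\min_{i,j}|\bm x_j\bm\rho-t_i|}{\|\bm\rho\|_\infty}$ (minimum over $0\le i\le M$, $1\le j\le N$). Let $\Lambda$ and $T_{\max}$ be positive integers. If $\gamma_{\min}>0$, $\Lambda>\frac{\|X\|_\infty+1}{2\gamma_{\min}}$ and $T_{\max}\ge\lceil\Lambda\|X\|_\infty\rceil$, then there exist $\bm\lambda\in\{-\Lambda,\dots,\Lambda\}^P$ and $\bm T\in\{-T_{\max},\dots,T_{\max}\}^{M+1}$ with $\mathrm{WNB}(\bm\lambda,\bm T)\ge\mathrm{WNB}(\bm\rho,\bm t)$.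
   Context: Samples $\bm x_j$ are row vectors, so $\bm x_j\bm\lambda$ is a scalar. Weights $\omega_0,\dots,\omega_M\in[0,1]$ with $\sum_i\omega_i=1$ are fixed. For coefficients $\bm\lambda\in\mathbb{R}^P$ and intercepts $\bm T=(T_0,\dots,T_M)$, the weighted net benefit is $\mathrm{WNB}(\bm\lambda,\bm T)=\sum_{i=0}^M\Big(\omega_i\sum_{j=1}^N I(\bm x_j\bm\lambda\ge T_i,\,y_j=1)-\frac{\omega_ip_i}{1-p_i}\sum_{j=1}^N I(\bm x_j\bm\lambda\ge T_i,\,y_j=0)\Big)$, where $I$ is the indicator function. *)

theory Defs
  imports Complex_Main
begin

text \<open>Samples x j (j = 1..N) are row vectors with coordinates x j k, k = 1..P.\<close>

definition dotp :: "nat \<Rightarrow> (nat \<Rightarrow> real) \<Rightarrow> (nat \<Rightarrow> real) \<Rightarrow> real" where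
  "dotp P xj v = (\<Sum>k=1..P. xj k * v k)"

definition WNB :: "nat \<Rightarrow> nat \<Rightarrow> nat \<Rightarrow> (nat \<Rightarrow> nat \<Rightarrow> real) \<Rightarrow> (nat \<Rightarrow> nat)
    \<Rightarrow> (nat \<Rightarrow> real) \<Rightarrow> (nat \<Rightarrow> real) \<Rightarrow> (nat \<Rightarrow> real) \<Rightarrow> (nat \<Rightarrow> real) \<Rightarrow> real" where
  "WNB N M P x y \<omega> p lam T =
     (\<Sum>i=0..M. \<omega> i * (\<Sum>j=1..N. if dotp P (x j) lam \<ge> T i \<and> y j = 1 then 1 else 0)
        - \<omega> i * p i / (1 - p i) * (\<Sum>j=1..N. if dotp P (x j) lam \<ge> T i \<and> y j = 0 then 1 else 0))"

definition norm_inf_vec :: "nat \<Rightarrow> (nat \<Rightarrow> real) \<Rightarrow> real" where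
  "norm_inf_vec P v = Max ((\<lambda>k. \<bar>v k\<bar>) ` {1..P})"

definition norm_inf_mat :: "nat \<Rightarrow> nat \<Rightarrow> (nat \<Rightarrow> nat \<Rightarrow> real) \<Rightarrow> real" where
  "norm_inf_mat N P x = Max ((\<lambda>j. \<Sum>k=1..P. \<bar>x j k\<bar>) ` {1..N})"

definition gamma_min :: "nat \<Rightarrow> nat \<Rightarrow> nat \<Rightarrow> (nat \<Rightarrow> nat \<Rightarrow> real) \<Rightarrow> (nat \<Rightarrow> real) \<Rightarrow> (nat \<Rightarrow> real) \<Rightarrow> real" where
  "gamma_min N M P x \<rho> t =
     Min ((\<lambda>(i,j). \<bar>dotp P (x j) \<rho> - t i\<bar>) ` ({0..M} \<times> {1..N})) / norm_inf_vec P \<rho>"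

end

theory Submission
  imports Defs
begin

text \<open>Scale \<open>\<rho>\<close> and \<open>t\<close> by \<open>c = \<Lambda> / \<parallel>\<rho>\<parallel>\<^sub>\<infinity>\<close> and round every coordinate to the nearest
  integer. Coordinates of \<open>\<rho>\<close> then round into \<open>[-\<Lambda>, \<Lambda>]\<close> and thresholds into \<open>[-T\<^sub>m\<^sub>a\<^sub>x, T\<^sub>m\<^sub>a\<^sub>x]\<close>.
  Rounding moves each score \<open>x\<^sub>j\<lambda>\<close> by at most \<open>\<parallel>X\<parallel>\<^sub>\<infinity>/2\<close> and each threshold by at most \<open>1/2\<close>,
  whereas after scaling every score is at distance at least \<open>\<Lambda>\<gamma>\<^sub>m\<^sub>i\<^sub>n > (\<parallel>X\<parallel>\<^sub>\<infinity> + 1)/2\<close>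
  from every threshold. Hence no sample changes side of any threshold, and the weighted net
  benefit is unchanged.\<close>

lemma abs_round_le_ceiling:
  fixes x :: "'a::floor_ceiling"
  assumes "\<bar>x\<bar> \<le> B"
  shows "\<bar>round x\<bar> \<le> \<lceil>B\<rceil>"
proof -
  have "x \<le> B" "- B \<le> x"
    using assms by (simp_all add: abs_le_iff)
  have "round x \<le> \<lceil>B\<rceil>"
    using round_mono[OF \<open>x \<le> B\<close>] ceiling_ge_round[of B] by (rule order_trans)
  moreover have "- \<lceil>B\<rceil> \<le> round x"
    using floor_le_round[of "- B"] round_mono[OF \<open>- B \<le> x\<close>] by (simp add: floor_minus)
  ultimately show ?thesis
    by (simp add: abs_le_iff)
qed

lemma abs_round_scaled_le:
  fixes c v :: real
  assumes "c \<ge> 0" and "\<bar>v\<bar> \<le> B"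
  shows "\<bar>round (c * v)\<bar> \<le> \<lceil>c * B\<rceil>"
  using assms by (intro abs_round_le_ceiling) (simp add: abs_mult mult_left_mono)

lemma dotp_diff: "dotp P xj u - dotp P xj v = dotp P xj (\<lambda>k. u k - v k)"
  unfolding dotp_def by (simp add: sum_subtractf algebra_simps)

lemma dotp_scale: "dotp P xj (\<lambda>k. c * v k) = c * dotp P xj v"
  unfolding dotp_def by (simp add: sum_distrib_left algebra_simps)

lemma abs_dotp_le:
  assumes "\<forall>k\<in>{1..P}. \<bar>v k\<bar> \<le> B"
  shows "\<bar>dotp P xj v\<bar> \<le> (\<Sum>k=1..P. \<bar>xj k\<bar>) * B"
proof -
  have "\<bar>dotp P xj v\<bar> \<le> (\<Sum>k=1..P. \<bar>xj k * v k\<bar>)"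
    unfolding dotp_def by (rule sum_abs)
  also have "\<dots> = (\<Sum>k=1..P. \<bar>xj k\<bar> * \<bar>v k\<bar>)"
    by (simp add: abs_mult)
  also have "\<dots> \<le> (\<Sum>k=1..P. \<bar>xj k\<bar> * B)"
    using assms by (intro sum_mono mult_left_mono) auto
  finally show ?thesis
    by (simp add: sum_distrib_right)
qed

lemma abs_le_norm_inf_vec: "k \<in> {1..P} \<Longrightarrow> \<bar>v k\<bar> \<le> norm_inf_vec P v"
  unfolding norm_inf_vec_def by (intro Max_ge) auto

lemma norm_inf_vec_pos:
  assumes "\<exists>k\<in>{1..P}. v k \<noteq> 0"
  shows "norm_inf_vec P v > 0"
proof -
  obtain k where "k \<in> {1..P}" and "v k \<noteq> 0"
    using assms by blast
  then have "0 < \<bar>v k\<bar>" and "\<bar>v k\<bar> \<le> norm_inf_vec P v"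
    by (simp_all add: abs_le_norm_inf_vec)
  then show ?thesis
    by linarith
qed

lemma row_norm_le_norm_inf_mat: "j \<in> {1..N} \<Longrightarrow> (\<Sum>k=1..P. \<bar>x j k\<bar>) \<le> norm_inf_mat N P x"
  unfolding norm_inf_mat_def by (intro Max_ge) auto

lemma abs_dotp_le_norm_inf:
  assumes "j \<in> {1..N}" and "norm_inf_vec P v \<ge> 0"
  shows "\<bar>dotp P (x j) v\<bar> \<le> norm_inf_vec P v * norm_inf_mat N P x"
proof -
  have "\<bar>dotp P (x j) v\<bar> \<le> (\<Sum>k=1..P. \<bar>x j k\<bar>) * norm_inf_vec P v"
    using abs_le_norm_inf_vec by (intro abs_dotp_le) blast
  also have "\<dots> \<le> norm_inf_mat N P x * norm_inf_vec P v"
    using assms by (intro mult_right_mono row_norm_le_norm_inf_mat)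
  finally show ?thesis
    by (simp add: mult.commute)
qed

lemma margin_le_abs_dotp_diff:
  assumes "norm_inf_vec P \<rho> > 0" and "i \<in> {0..M}" and "j \<in> {1..N}"
  shows "gamma_min N M P x \<rho> t * norm_inf_vec P \<rho> \<le> \<bar>dotp P (x j) \<rho> - t i\<bar>"
proof -
  have "gamma_min N M P x \<rho> t * norm_inf_vec P \<rho>
      = Min ((\<lambda>(i, j). \<bar>dotp P (x j) \<rho> - t i\<bar>) ` ({0..M} \<times> {1..N}))"
    unfolding gamma_min_def using assms(1) by simp
  also have "\<dots> \<le> \<bar>dotp P (x j) \<rho> - t i\<bar>"
    using assms(2,3) by (intro Min_le) auto
  finally show ?thesis .
qed

lemma abs_threshold_le:
  fixes N :: nat and t :: "nat \<Rightarrow> real"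
  assumes "N > 0" and "\<forall>j\<in>{1..N}. \<bar>d j\<bar> \<le> B"
    and "- Max ((\<lambda>j. \<bar>d j\<bar>) ` {1..N}) \<le> t 0"
    and "\<forall>i<M. t i \<le> t (Suc i)"
    and "t M \<le> Max ((\<lambda>j. \<bar>d j\<bar>) ` {1..N})"
    and "i \<le> M"
  shows "\<bar>t i\<bar> \<le> B"
proof -
  have "Max ((\<lambda>j. \<bar>d j\<bar>) ` {1..N}) \<le> B"
    using assms(1,2) by simp
  moreover have "t 0 \<le> t i" "t i \<le> t M"
    using assms(4,6) by (auto intro: lift_Suc_mono_le_ivl[where N = "{..<M}"])
  ultimately show ?thesis
    using assms(3,5) by linarith
qed

lemma le_iff_le_if_perturbation_below_margin:
  fixes a b s u m X :: real
  assumes "\<bar>a - b\<bar> \<le> X / 2" and "\<bar>s - u\<bar> \<le> 1 / 2"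
    and "m \<le> \<bar>b - u\<bar>" and "(X + 1) / 2 < m"
  shows "s \<le> a \<longleftrightarrow> u \<le> b"
  using assms by (auto simp: abs_le_iff abs_if split: if_splits)

lemma round_scaled_threshold_iff:
  fixes c m X s :: real
  assumes c_pos: "c > 0" and row: "(\<Sum>k=1..P. \<bar>xj k\<bar>) \<le> X"
    and margin: "m \<le> \<bar>dotp P xj \<rho> - s\<bar>" and big: "(X + 1) / 2 < c * m"
  shows "real_of_int (round (c * s)) \<le> dotp P xj (\<lambda>k. real_of_int (round (c * \<rho> k)))
    \<longleftrightarrow> s \<le> dotp P xj \<rho>"
proof -
  let ?lam = "\<lambda>k. real_of_int (round (c * \<rho> k))"
  have "\<bar>dotp P xj ?lam - c * dotp P xj \<rho>\<bar> \<le> (\<Sum>k=1..P. \<bar>xj k\<bar>) * (1 / 2)"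
    unfolding dotp_scale[symmetric] dotp_diff by (intro abs_dotp_le ballI of_int_round_abs_le)
  also have "\<dots> \<le> X / 2"
    using row by simp
  finally have score_error: "\<bar>dotp P xj ?lam - c * dotp P xj \<rho>\<bar> \<le> X / 2" .
  have scaled_margin: "c * m \<le> \<bar>c * dotp P xj \<rho> - c * s\<bar>"
    using c_pos margin by (simp add: abs_mult flip: right_diff_distrib)
  have "real_of_int (round (c * s)) \<le> dotp P xj ?lam \<longleftrightarrow> c * s \<le> c * dotp P xj \<rho>"
    using score_error of_int_round_abs_le scaled_margin big
    by (rule le_iff_le_if_perturbation_below_margin)
  with c_pos show ?thesis
    by simp
qed

lemma WNB_cong:
  assumes "\<And>i j. i \<in> {0..M} \<Longrightarrow> j \<in> {1..N} \<Longrightarrow> T i \<le> dotp P (x j) lam \<longleftrightarrow> t i \<le> dotp P (x j) \<rho>"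
  shows "WNB N M P x y \<omega> p lam T = WNB N M P x y \<omega> p \<rho> t"
  unfolding WNB_def using assms
  by (intro sum.cong refl arg_cong2[where f = "(-)"] arg_cong2[where f = "(*)"]) simp_all

lemma WNB_round_scaled_eq:
  assumes c_pos: "c > 0" and norm_pos: "norm_inf_vec P \<rho> > 0"
    and big: "(norm_inf_mat N P x + 1) / 2 < c * (gamma_min N M P x \<rho> t * norm_inf_vec P \<rho>)"
  shows "WNB N M P x y \<omega> p (\<lambda>k. real_of_int (round (c * \<rho> k))) (\<lambda>i. real_of_int (round (c * t i)))
    = WNB N M P x y \<omega> p \<rho> t"
proof (rule WNB_cong)
  show "real_of_int (round (c * t i)) \<le> dotp P (x j) (\<lambda>k. real_of_int (round (c * \<rho> k)))
      \<longleftrightarrow> t i \<le> dotp P (x j) \<rho>" if "i \<in> {0..M}" and "j \<in> {1..N}" for i j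
    using c_pos row_norm_le_norm_inf_mat[OF that(2)] margin_le_abs_dotp_diff[OF norm_pos that] big
    by (rule round_scaled_threshold_iff)
qed

theorem theorem3:
  fixes N M P :: nat
    and x :: "nat \<Rightarrow> nat \<Rightarrow> real" and y :: "nat \<Rightarrow> nat"
    and \<omega> p :: "nat \<Rightarrow> real"
    and \<rho> t :: "nat \<Rightarrow> real"
    and \<Lambda> Tmax :: int
  assumes y01: "\<forall>j\<in>{1..N}. y j \<in> {0, 1}"
    and \<omega>_range: "\<forall>i\<in>{0..M}. 0 \<le> \<omega> i \<and> \<omega> i \<le> 1"
    and \<omega>_sum: "(\<Sum>i=0..M. \<omega> i) = 1"
    and p0: "p 0 = 0"
    and p_mono: "\<forall>i<M. p i < p (Suc i)"
    and pM: "p M < 1"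
    and \<rho>_nz: "\<exists>k\<in>{1..P}. \<rho> k \<noteq> 0"
    and t0: "- Max ((\<lambda>j. \<bar>dotp P (x j) \<rho>\<bar>) ` {1..N}) \<le> t 0"
    and t_mono: "\<forall>i<M. t i \<le> t (Suc i)"
    and tM: "t M \<le> Max ((\<lambda>j. \<bar>dotp P (x j) \<rho>\<bar>) ` {1..N})"
    and \<Lambda>_pos: "\<Lambda> > 0" and Tmax_pos: "Tmax > 0"
    and \<gamma>_pos: "gamma_min N M P x \<rho> t > 0"
    and \<Lambda>_big: "real_of_int \<Lambda> > (norm_inf_mat N P x + 1) / (2 * gamma_min N M P x \<rho> t)"
    and Tmax_big: "Tmax \<ge> \<lceil>real_of_int \<Lambda> * norm_inf_mat N P x\<rceil>"
  shows "\<exists>lam T :: nat \<Rightarrow> int.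
           (\<forall>k\<in>{1..P}. \<bar>lam k\<bar> \<le> \<Lambda>) \<and> (\<forall>i\<in>{0..M}. \<bar>T i\<bar> \<le> Tmax) \<and>
           WNB N M P x y \<omega> p (\<lambda>k. real_of_int (lam k)) (\<lambda>i. real_of_int (T i))
             \<ge> WNB N M P x y \<omega> p \<rho> t"
proof (cases "N = 0")
  case True
  then show ?thesis
    using \<Lambda>_pos Tmax_pos by (intro exI[of _ "\<lambda>_. 0"]) (simp add: WNB_def)
next
  case False
  define n where "n = norm_inf_vec P \<rho>"
  define c where "c = real_of_int \<Lambda> / n"
  have n_pos: "n > 0"
    unfolding n_def using \<rho>_nz by (rule norm_inf_vec_pos)
  have c_pos: "c > 0" and scale: "c * n = real_of_int \<Lambda>"
    unfolding c_def using n_pos \<Lambda>_pos by simp_all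
  have t_bound: "\<bar>t i\<bar> \<le> n * norm_inf_mat N P x" if "i \<le> M" for i
    using False abs_dotp_le_norm_inf n_pos that t0 t_mono tM unfolding n_def
    by (intro abs_threshold_le[where d = "\<lambda>j. dotp P (x j) \<rho>"]) auto
  have "(norm_inf_mat N P x + 1) / 2 < real_of_int \<Lambda> * gamma_min N M P x \<rho> t"
    using \<Lambda>_big \<gamma>_pos by (simp add: field_simps)
  also have "\<dots> = c * (gamma_min N M P x \<rho> t * n)"
    by (simp flip: scale add: ac_simps)
  finally have margin_big: "(norm_inf_mat N P x + 1) / 2 < c * (gamma_min N M P x \<rho> t * n)" .
  have "WNB N M P x y \<omega> p (\<lambda>k. real_of_int (round (c * \<rho> k)))
      (\<lambda>i. real_of_int (round (c * t i))) = WNB N M P x y \<omega> p \<rho> t"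
    using c_pos n_pos margin_big unfolding n_def by (rule WNB_round_scaled_eq)
  moreover have "\<bar>round (c * \<rho> k)\<bar> \<le> \<Lambda>" if "k \<in> {1..P}" for k
    using abs_round_scaled_le[of c "\<rho> k" n] abs_le_norm_inf_vec[OF that] c_pos scale
    by (simp add: n_def)
  moreover have "\<bar>round (c * t i)\<bar> \<le> Tmax" if "i \<in> {0..M}" for i
  proof -
    have "\<bar>round (c * t i)\<bar> \<le> \<lceil>c * (n * norm_inf_mat N P x)\<rceil>"
      using c_pos that by (intro abs_round_scaled_le t_bound) auto
    also have "\<dots> \<le> Tmax"
      using Tmax_big by (simp flip: scale add: mult.assoc)
    finally show ?thesis .
  qed
  ultimately show ?thesis
    by (intro exI[of _ "\<lambda>k. round (c * \<rho> k)"] exI[of _ "\<lambda>i. round (c * t i)"]) auto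
qed

end
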